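(* Let $m\ge1$, $q=2^m$, let $n$ be even, and let $L$ be a $2$-linear polynomial over $\mathbb F_{q^n}$ that induces a bijection of $\mathbb F_{q^n}$, with inverse map written as \[L^{-1}(x)=\sum_{i=0}^{m-1}L_i\big(x^{2^i}\big),\] where each $L_i$ is a $q$-linear polynomial over $\mathbb F_{q^n}$. Then the following are equivalent: (a) $\mathrm{Tr}(x^{q+1})+L(x)$ is a permutation polynomial of $\mathbb F_{q^n}$; (b) $L_i(1)\in\mathbb F_{q^2}$ for $0\le i<m$; (c) $\mathbb F_q\subseteq L(\mathbb F_{q^2})$.
   Context: $\mathrm{Tr}$ denotes the trace map of $\mathbb F_{q^n}$ over $\mathbb F_q$. A $2$-linear polynomial over $\mathbb F_{q^n}$ has the form $\sum_{j=0}^{mn-1}a_jx^{2^j}$; a $q$-linear polynomial has the form $\sum_{j=0}^{n-1}a_jx^{q^j}$ ($a_j\in\mathbb F_{q^n}$); every $2$-linear polynomial can be written as $\sum_{i=0}^{m-1}L_i(x^{2^i})$ with $q$-linear $L_i$. Polynomials are regarded as maps on $\mathbb F_{q^n}$. *)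

theory Defs
  imports Main
begin

text \<open>Throughout, the ambient type 'a is a finite field with q^n = 2^(m*n) elements.\<close>

definition trace_map :: "nat \<Rightarrow> nat \<Rightarrow> 'a::field \<Rightarrow> 'a" where
  "trace_map q n x = (\<Sum>j<n. x ^ (q ^ j))"

definition lin2_poly :: "nat \<Rightarrow> nat \<Rightarrow> (nat \<Rightarrow> 'a::field) \<Rightarrow> 'a \<Rightarrow> 'a" where
  "lin2_poly m n a x = (\<Sum>j<m*n. a j * x ^ (2 ^ j))"

definition qlin_poly :: "nat \<Rightarrow> nat \<Rightarrow> (nat \<Rightarrow> 'a::field) \<Rightarrow> 'a \<Rightarrow> 'a" where
  "qlin_poly q n c x = (\<Sum>j<n. c j * x ^ (q ^ j))"

definition subfield_of_order :: "nat \<Rightarrow> 'a::field set" where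
  "subfield_of_order Q = {x. x ^ Q = x}"

end

(*
  Put f x = Tr (x^(q+1)) + L x. Expanding, f (x + d) = f x + Tr (d^(q+1)) + Tr (x * polar d) + L d
  with polar d = d^q + d^(q^(n-1)). As n is even, polar d = 0 exactly on F_(q^2), where moreover
  Tr (d^(q+1)) = 0. Off F_(q^2), Tr (x * polar d) takes every value in F_q as x varies, so f has a
  collision in direction d whenever L d lies in F_q; on F_(q^2) a collision forces L d = 0. Hence
  f is a permutation iff L^(-1) maps F_q into F_(q^2). For k in F_q, L^(-1) k = sum_i k^(2^i) L_i(1),
  so this holds iff the polynomial sum_i (L_i(1)^(q^2) - L_i(1)) X^(2^i), of degree less than q,
  vanishes on F_q, i.e. iff every L_i(1) lies in F_(q^2).
*)
theory Submission
  imports Defs "HOL-Computational_Algebra.Polynomial"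
begin

lemma power_card_UNIV_eq_self: "(x::'a::{field,finite}) ^ card (UNIV::'a set) = x"
proof (cases "x = 0")
  case False
  have "(\<Prod>y\<in>UNIV-{0}. x * y) = (\<Prod>y\<in>UNIV-{0}. y)"
    by (rule prod.reindex_bij_witness[of _ "\<lambda>y. y / x" "\<lambda>y. x * y"]) (use False in auto)
  then have "x ^ card (UNIV - {0::'a}) = 1"
    by (simp add: prod.distrib)
  moreover have "card (UNIV::'a set) = Suc (card (UNIV - {0::'a}))"
    by (rule card_Suc_Diff1[symmetric]) simp_all
  ultimately show ?thesis
    by (metis power_Suc mult_1_right)
qed (simp add: finite_UNIV_card_ge_0)

lemma CHAR_eq_2_if_card_UNIV_eq_power_2:
  assumes "card (UNIV::'a::{field,finite} set) = 2 ^ k" and "k \<ge> 1"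
  shows "CHAR('a) = 2"
proof -
  have "even (card (UNIV::'a set))"
    using assms by simp
  then have "(-1::'a) = 1"
    using power_card_UNIV_eq_self[of "-1::'a"] by simp
  then have "of_nat 2 = (0::'a)"
    by (metis add.right_inverse of_nat_1 of_nat_add one_add_one)
  then have "CHAR('a) dvd 2"
    by (simp only: of_nat_eq_0_iff_char_dvd)
  then show ?thesis
    using two_is_prime_nat CHAR_not_1 by (metis One_nat_def prime_nat_iff)
qed

lemma add_power_2_power:
  assumes "CHAR('a::comm_semiring_1) = 2"
  shows "(x + y :: 'a) ^ (2 ^ k) = x ^ (2 ^ k) + y ^ (2 ^ k)"
  by (rule freshmans_dream') (simp_all add: assms)

lemma sum_power_2_power:
  assumes "CHAR('a::comm_semiring_1) = 2"
  shows "(\<Sum>i\<in>A. f i :: 'a) ^ (2 ^ k) = (\<Sum>i\<in>A. f i ^ (2 ^ k))"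
  by (rule freshmans_dream_sum') (simp_all add: assms)

lemma card_le_if_power_sum_vanishes_on:
  fixes c :: "'i \<Rightarrow> 'a::idom"
  assumes "finite I" and "inj_on e I" and "i \<in> I" and "c i \<noteq> 0" and "\<forall>j\<in>I. e j \<le> d"
    and "\<forall>x\<in>S. (\<Sum>j\<in>I. c j * x ^ e j) = 0"
  shows "card S \<le> d"
proof -
  define p where "p = (\<Sum>j\<in>I. monom (c j) (e j))"
  have "coeff p (e i) = (\<Sum>j\<in>I. if j = i then c j else 0)"
    unfolding p_def coeff_sum coeff_monom
    using assms(2,3) by (intro sum.cong) (auto dest: inj_onD)
  then have "p \<noteq> 0"
    using assms(1,3,4) by auto
  have "S \<subseteq> {x. poly p x = 0}"
    using assms(6) by (auto simp: p_def poly_sum poly_monom)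
  then have "card S \<le> card {x. poly p x = 0}"
    using poly_roots_finite[OF \<open>p \<noteq> 0\<close>] by (rule card_mono[rotated])
  also have "\<dots> \<le> degree p"
    using card_poly_roots_bound[OF \<open>p \<noteq> 0\<close>] .
  also have "\<dots> \<le> d"
    unfolding p_def using assms(1,5)
    by (intro degree_sum_le) (auto intro: order.trans[OF degree_monom_le])
  finally show ?thesis .
qed

lemma power_sum_vanishing_on_imp_coeff_eq_0:
  fixes c :: "'i \<Rightarrow> 'a::idom"
  assumes "finite I" and "inj_on e I" and "\<forall>j\<in>I. e j < card S"
    and "\<forall>x\<in>S. (\<Sum>j\<in>I. c j * x ^ e j) = 0" and "i \<in> I"
  shows "c i = 0"
proof (rule ccontr)
  assume "c i \<noteq> 0"
  then have "card S \<le> Max (e ` I)"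
    using assms by (intro card_le_if_power_sum_vanishes_on) auto
  also have "\<dots> < card S"
    using assms(1,3,5) by (subst Max_less_iff) auto
  finally show False
    by simp
qed

lemma card_UNIV_le_card_range_mult_card_kernel:
  fixes T :: "'a::{ab_group_add,finite} \<Rightarrow> 'b::ab_group_add"
  assumes additive: "\<And>x y. T (x + y) = T x + T y"
  shows "card (UNIV::'a set) \<le> card (range T) * card {x. T x = 0}"
proof -
  have T_diff: "T (x - y) = T x - T y" for x y
    using additive[of "x - y" y] by simp
  have "card (UNIV::'a set) = card (\<Union>v\<in>range T. T -` {v})"
    by (intro arg_cong[where f = card]) auto
  also have "\<dots> \<le> (\<Sum>v\<in>range T. card (T -` {v}))"
    by (rule card_UN_le) simp
  also have "\<dots> \<le> (\<Sum>v\<in>range T. card {x. T x = 0})"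
  proof (rule sum_mono)
    fix v assume "v \<in> range T"
    then obtain x0 where "T x0 = v" by auto
    then have "(\<lambda>x. x - x0) ` (T -` {v}) \<subseteq> {x. T x = 0}"
      by (auto simp: T_diff)
    then show "card (T -` {v}) \<le> card {x. T x = 0}"
      by (intro card_inj_on_le[of "\<lambda>x. x - x0"]) (auto simp: inj_on_def)
  qed
  also have "\<dots> = card (range T) * card {x. T x = 0}"
    by (simp only: sum_constant of_nat_id)
  finally show ?thesis .
qed

lemma lin2_poly_add:
  assumes "CHAR('a::field) = 2"
  shows "lin2_poly m n a (x + y :: 'a) = lin2_poly m n a x + lin2_poly m n a y"
  unfolding lin2_poly_def by (simp add: add_power_2_power[OF assms] distrib_left sum.distrib)

lemma qlin_poly_fixed_point:
  assumes "u ^ q = u"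
  shows "qlin_poly q n c (u::'a::field) = u * qlin_poly q n c 1"
proof -
  have "u ^ (q ^ j) = u" for j
    by (induction j) (simp_all add: power_mult assms)
  then show ?thesis
    by (simp add: qlin_poly_def sum_distrib_left mult.commute)
qed

lemma subset_image_iff_inv_mem:
  assumes "bij f"
  shows "A \<subseteq> f ` B \<longleftrightarrow> (\<forall>y\<in>A. inv f y \<in> B)"
proof -
  have "f ` B = {y. inv f y \<in> B}"
    using bij_image_Collect_eq[OF assms, of "\<lambda>x. x \<in> B"] by simp
  then show ?thesis
    by auto
qed

locale binary_extension_field =
  fixes m n q :: nat and Tr :: "'a::{field,finite} \<Rightarrow> 'a"
  defines "Tr \<equiv> trace_map q n"
  assumes q_def: "q = 2 ^ m" and m_pos: "m \<ge> 1" and n_pos: "n \<ge> 1"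
    and card_UNIV: "card (UNIV :: 'a set) = q ^ n"
begin

abbreviation Fq :: "'a set" where "Fq \<equiv> subfield_of_order q"
abbreviation Fq2 :: "'a set" where "Fq2 \<equiv> subfield_of_order (q ^ 2)"

lemma q_ge_2: "q \<ge> 2"
  using q_def m_pos by (metis power_increasing power_one_right one_le_numeral)

lemma CHAR_eq_2: "CHAR('a) = 2"
  using card_UNIV m_pos n_pos
  by (intro CHAR_eq_2_if_card_UNIV_eq_power_2[of "m * n"]) (simp_all add: q_def power_mult)

lemma add_power_q_power: "(x + y :: 'a) ^ (q ^ j) = x ^ (q ^ j) + y ^ (q ^ j)"
  using add_power_2_power[OF CHAR_eq_2, of x y "m * j"] by (simp add: q_def power_mult)

lemma sum_power_q_power: "(\<Sum>i\<in>A. f i :: 'a) ^ (q ^ j) = (\<Sum>i\<in>A. f i ^ (q ^ j))"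
  using sum_power_2_power[OF CHAR_eq_2, of f A "m * j"] by (simp add: q_def power_mult)

lemma add_self: "x + x = (0::'a)"
  using uminus_CHAR_2[OF CHAR_eq_2, of x] by (metis add.right_inverse)

lemma add_eq_0_iff_eq: "x + y = (0::'a) \<longleftrightarrow> x = y"
  using add_eq_0_iff[of x y] uminus_CHAR_2[OF CHAR_eq_2, of x] by auto

lemma power_q_power_n: "(x::'a) ^ (q ^ n) = x"
  using power_card_UNIV_eq_self[of x] card_UNIV by simp

lemma power_q_power_pred_n_q: "((x::'a) ^ (q ^ (n - 1))) ^ q = x"
proof -
  have "q ^ (n - 1) * q = q ^ n"
    using n_pos by (cases n) simp_all
  then show ?thesis
    by (simp add: power_q_power_n flip: power_mult)
qed

lemma Fq_subset_Fq2: "Fq \<subseteq> Fq2"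
  by (auto simp: subfield_of_order_def power2_eq_square power_mult)

lemma zero_in_Fq2: "0 \<in> Fq2"
  using q_ge_2 by (simp add: subfield_of_order_def)

lemma Fq_add: "x \<in> Fq \<Longrightarrow> y \<in> Fq \<Longrightarrow> x + y \<in> Fq"
  using add_power_q_power[of x y 1] by (simp add: subfield_of_order_def)

lemma Fq_power: "x \<in> Fq \<Longrightarrow> x ^ k \<in> Fq"
  by (simp add: subfield_of_order_def flip: power_mult) (metis mult.commute power_mult)

lemma trace_add: "Tr (x + y) = Tr x + Tr y"
  by (simp add: Tr_def trace_map_def add_power_q_power sum.distrib)

lemma trace_zero: "Tr 0 = 0"
  using q_ge_2 by (simp add: Tr_def trace_map_def power_0_left)

lemma trace_power_q: "Tr (x ^ q) = Tr x"
proof -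
  have "Tr (x ^ q) = (\<Sum>j<n. x ^ (q ^ Suc j))"
    by (simp add: Tr_def trace_map_def flip: power_mult)
  also have "\<dots> = (\<Sum>j<n. x ^ (q ^ j))"
    using sum.lessThan_Suc_shift[of "\<lambda>j. x ^ (q ^ j)" n] power_q_power_n[of x] by simp
  finally show ?thesis
    by (simp add: Tr_def trace_map_def)
qed

lemma trace_in_Fq: "Tr x \<in> Fq"
proof -
  have "Tr x ^ q = Tr (x ^ q)"
    using sum_power_q_power[of "\<lambda>j. x ^ (q ^ j)" "{..<n}" 1]
    by (simp add: Tr_def trace_map_def flip: power_mult) (simp add: mult.commute)
  then show ?thesis
    by (simp add: subfield_of_order_def trace_power_q)
qed

lemma card_trace_kernel_le: "card {x::'a. Tr x = 0} \<le> q ^ (n - 1)"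
proof (rule card_le_if_power_sum_vanishes_on[of "{..<n}" "\<lambda>j. q ^ j" "n - 1" "\<lambda>_. 1"])
  show "inj_on (\<lambda>j. q ^ j) {..<n}"
    using q_ge_2 by (simp add: inj_on_def power_inject_exp)
  show "\<forall>j\<in>{..<n}. q ^ j \<le> q ^ (n - 1)"
    using q_ge_2 by (auto intro: power_increasing)
  show "\<forall>x\<in>{x. Tr x = 0}. (\<Sum>j<n. 1 * x ^ (q ^ j)) = 0"
    by (simp add: Tr_def trace_map_def)
qed (use n_pos in auto)

lemma card_Fq_le: "card Fq \<le> q"
proof (rule card_le_if_power_sum_vanishes_on[of "{1, q}" id q "\<lambda>j. if j = q then 1 else -1"])
  show "\<forall>x\<in>Fq. (\<Sum>j\<in>{1, q}. (if j = q then 1 else -1) * x ^ id j) = 0"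
    using q_ge_2 by (simp add: subfield_of_order_def)
qed (use q_ge_2 in auto)

lemma range_trace: "range Tr = Fq" and card_Fq: "card Fq = q"
proof -
  have "q * q ^ (n - 1) = card (UNIV :: 'a set)"
    using card_UNIV n_pos by (simp flip: power_Suc)
  also have "\<dots> \<le> card (range Tr) * card {x. Tr x = 0}"
    using trace_add by (rule card_UNIV_le_card_range_mult_card_kernel)
  also have "\<dots> \<le> card (range Tr) * q ^ (n - 1)"
    using card_trace_kernel_le by simp
  finally have "q \<le> card (range Tr)"
    using q_ge_2 by simp
  moreover have sub: "range Tr \<subseteq> Fq"
    using trace_in_Fq by auto
  then have "card (range Tr) \<le> card Fq"
    by (intro card_mono) auto
  ultimately have "card (range Tr) = q" and "card Fq = q"
    using card_Fq_le by linarith+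
  then show "card Fq = q" and "range Tr = Fq"
    using sub by (simp_all add: card_subset_eq)
qed

lemma trace_scaled_surj:
  assumes "v \<noteq> 0" and "k \<in> Fq"
  obtains x where "Tr (x * v) = k"
proof -
  obtain y where "Tr y = k"
    using assms(2) range_trace by (metis rangeE)
  with assms(1) show ?thesis
    by (intro that[of "y / v"]) simp
qed

lemma qlin_sum_on_Fq_in_Fq2_iff:
  fixes b :: "nat \<Rightarrow> nat \<Rightarrow> 'a"
  shows "(\<forall>k\<in>Fq. (\<Sum>i<m. qlin_poly q n (b i) (k ^ 2 ^ i)) \<in> Fq2)
     \<longleftrightarrow> (\<forall>i<m. qlin_poly q n (b i) 1 \<in> Fq2)"
proof -
  define C where "C i = qlin_poly q n (b i) 1" for i
  have Fq2_iff: "x \<in> Fq2 \<longleftrightarrow> x ^ (q ^ 2) + x = 0" for x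
    by (simp add: subfield_of_order_def add_eq_0_iff_eq)
  have "(\<Sum>i<m. qlin_poly q n (b i) (k ^ 2 ^ i)) ^ (q ^ 2) + (\<Sum>i<m. qlin_poly q n (b i) (k ^ 2 ^ i))
      = (\<Sum>i<m. (C i ^ (q ^ 2) + C i) * k ^ 2 ^ i)" if "k \<in> Fq" for k
  proof -
    have "k ^ 2 ^ i \<in> Fq2" for i
      using Fq_power Fq_subset_Fq2 that by blast
    moreover have "qlin_poly q n (b i) (k ^ 2 ^ i) = C i * k ^ 2 ^ i" for i
      using Fq_power[OF that, of "2 ^ i"]
      by (subst qlin_poly_fixed_point) (simp_all add: C_def subfield_of_order_def mult.commute)
    ultimately show ?thesis
      by (simp add: sum_power_q_power power_mult_distrib subfield_of_order_def
          distrib_right sum.distrib)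
  qed
  then have "(\<forall>k\<in>Fq. (\<Sum>i<m. qlin_poly q n (b i) (k ^ 2 ^ i)) \<in> Fq2)
      \<longleftrightarrow> (\<forall>k\<in>Fq. (\<Sum>i<m. (C i ^ (q ^ 2) + C i) * k ^ 2 ^ i) = 0)"
    by (simp add: Fq2_iff)
  also have "\<dots> \<longleftrightarrow> (\<forall>i<m. C i ^ (q ^ 2) + C i = 0)"
  proof
    assume vanish: "\<forall>k\<in>Fq. (\<Sum>i<m. (C i ^ (q ^ 2) + C i) * k ^ 2 ^ i) = 0"
    show "\<forall>i<m. C i ^ (q ^ 2) + C i = 0"
    proof (intro allI impI)
      fix i assume "i < m"
      have "\<forall>j\<in>{..<m}. 2 ^ j < card Fq"
        using card_Fq by (simp add: q_def)
      with vanish \<open>i < m\<close> show "C i ^ (q ^ 2) + C i = 0"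
        by (intro power_sum_vanishing_on_imp_coeff_eq_0[where e = "\<lambda>j. 2 ^ j" and I = "{..<m}"])
          (auto simp: inj_on_def)
    qed
  qed simp
  finally show ?thesis
    by (simp add: C_def Fq2_iff)
qed

definition polar :: "'a \<Rightarrow> 'a" where
  "polar d = d ^ q + d ^ (q ^ (n - 1))"

lemma trace_power_Suc_q_add:
  "Tr ((x + d) ^ (q + 1)) = Tr (x ^ (q + 1)) + Tr (d ^ (q + 1)) + Tr (x * polar d)"
proof -
  have "(x * d ^ (q ^ (n - 1))) ^ q = x ^ q * d"
    using power_q_power_pred_n_q[of d] by (simp add: power_mult_distrib)
  then have "Tr (x ^ q * d) = Tr (x * d ^ (q ^ (n - 1)))"
    using trace_power_q by metis
  moreover have "(x + d) ^ (q + 1) = x ^ (q + 1) + d ^ (q + 1) + x ^ q * d + x * d ^ q"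
    using add_power_q_power[of x d 1] by (simp add: algebra_simps)
  ultimately show ?thesis
    by (simp add: polar_def trace_add algebra_simps)
qed

end

locale even_binary_extension_field = binary_extension_field +
  assumes n_even: "even n"
begin

lemma trace_Fq_eq_0: "k \<in> Fq \<Longrightarrow> Tr k = 0"
proof -
  assume "k \<in> Fq"
  then have "k ^ (q ^ j) = k" for j
    by (induction j) (simp_all add: subfield_of_order_def power_mult)
  then have "Tr k = of_nat n * k"
    by (simp add: Tr_def trace_map_def)
  also have "of_nat n = (0::'a)"
    using n_even by (simp add: of_nat_eq_0_iff_char_dvd CHAR_eq_2)
  finally show "Tr k = 0"
    by simp
qed

lemma trace_norm_Fq2: "d \<in> Fq2 \<Longrightarrow> Tr (d ^ (q + 1)) = 0"
proof -
  assume "d \<in> Fq2"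
  then have "(d ^ (q + 1)) ^ q = d ^ (q + 1)"
    by (simp add: subfield_of_order_def power_mult_distrib power2_eq_square mult.commute
        flip: power_mult)
  then show ?thesis
    by (intro trace_Fq_eq_0) (simp add: subfield_of_order_def)
qed

lemma polar_eq_0_iff: "polar d = 0 \<longleftrightarrow> d \<in> Fq2"
proof
  assume "d \<in> Fq2"
  then have Fq2: "d ^ (q ^ 2) = d"
    by (simp add: subfield_of_order_def)
  have iter: "d ^ ((q ^ 2) ^ k) = d" for k
  proof (induction k)
    case (Suc k)
    have "d ^ ((q ^ 2) ^ Suc k) = (d ^ (q ^ 2)) ^ ((q ^ 2) ^ k)"
      by (simp only: power_Suc power_mult)
    then show ?case
      using Suc.IH Fq2 by simp
  qed simp
  have "\<exists>k. n - 1 = 2 * k + 1"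
    using n_even n_pos by presburger
  then obtain k where "n - 1 = 2 * k + 1" ..
  then have "q ^ (n - 1) = (q ^ 2) ^ k * q"
    by (simp add: power_add power_mult)
  then have "d ^ (q ^ (n - 1)) = d ^ q"
    by (simp only: power_mult iter)
  then show "polar d = 0"
    by (simp add: polar_def add_self)
next
  assume "polar d = 0"
  then have "d ^ q = d ^ (q ^ (n - 1))"
    by (simp add: polar_def add_eq_0_iff_eq)
  then have "d ^ (q ^ 2) = d"
    using power_q_power_pred_n_q[of d] by (simp add: power2_eq_square power_mult)
  then show "d \<in> Fq2"
    by (simp add: subfield_of_order_def)
qed

lemma trace_quad_add_shift:
  fixes L :: "'a \<Rightarrow> 'a"
  assumes "\<And>x y. L (x + y) = L x + L y"
  shows "Tr ((x + d) ^ (q + 1)) + L (x + d)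
    = Tr (x ^ (q + 1)) + L x + (Tr (d ^ (q + 1)) + Tr (x * polar d) + L d)"
  unfolding assms trace_power_Suc_q_add by (simp only: ac_simps)

lemma Fq_subset_image_Fq2_if_inj_trace_quad_add:
  fixes L :: "'a \<Rightarrow> 'a"
  assumes additive: "\<And>x y. L (x + y) = L x + L y" and "surj L"
    and inj: "inj (\<lambda>x. Tr (x ^ (q + 1)) + L x)"
  shows "Fq \<subseteq> L ` Fq2"
proof
  fix k assume k: "k \<in> Fq"
  obtain d where d: "L d = k"
    using \<open>surj L\<close> by (metis surjD)
  have "d \<in> Fq2"
  proof (rule ccontr)
    assume "d \<notin> Fq2"
    then have "polar d \<noteq> 0"
      by (simp add: polar_eq_0_iff)
    moreover have "Tr (d ^ (q + 1)) + k \<in> Fq"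
      using Fq_add trace_in_Fq k by blast
    ultimately obtain x where x: "Tr (x * polar d) = Tr (d ^ (q + 1)) + k"
      by (rule trace_scaled_surj)
    have "Tr (d ^ (q + 1)) + Tr (x * polar d) + L d = 0"
      unfolding x d by (simp add: add.assoc add_self flip: add.assoc[of _ _ k])
    then have "Tr ((x + d) ^ (q + 1)) + L (x + d) = Tr (x ^ (q + 1)) + L x"
      by (simp only: trace_quad_add_shift[OF additive] add_0_right)
    then have "x + d = x"
      by (rule injD[OF inj])
    with \<open>d \<notin> Fq2\<close> show False
      using zero_in_Fq2 by simp
  qed
  with d show "k \<in> L ` Fq2"
    by blast
qed

lemma inj_trace_quad_add_if_Fq_subset_image_Fq2:
  fixes L :: "'a \<Rightarrow> 'a"
  assumes additive: "\<And>x y. L (x + y) = L x + L y" and "inj L"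
    and Fq_subset: "Fq \<subseteq> L ` Fq2"
  shows "inj (\<lambda>x. Tr (x ^ (q + 1)) + L x)"
proof (rule injI)
  fix x y assume eq: "Tr (x ^ (q + 1)) + L x = Tr (y ^ (q + 1)) + L y"
  define d where "d = y - x"
  have L0: "L 0 = 0"
    using additive[of 0 0] by (metis add.right_neutral add_left_cancel)
  have "x + d = y"
    by (simp add: d_def)
  then have "Tr (x ^ (q + 1)) + L x + (Tr (d ^ (q + 1)) + Tr (x * polar d) + L d)
      = Tr (y ^ (q + 1)) + L y"
    using trace_quad_add_shift[OF additive, of x d] by simp
  also have "\<dots> = Tr (x ^ (q + 1)) + L x"
    using eq by simp
  finally have "Tr (d ^ (q + 1)) + Tr (x * polar d) + L d = 0"
    by simp
  then have Ld: "L d = Tr (d ^ (q + 1)) + Tr (x * polar d)"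
    by (metis add_eq_0_iff_eq)
  then have "L d \<in> Fq"
    by (simp add: Fq_add trace_in_Fq)
  with Fq_subset \<open>inj L\<close> have "d \<in> Fq2"
    by (auto dest: injD)
  then have "L d = L 0"
    using Ld L0 trace_norm_Fq2 polar_eq_0_iff[of d] trace_zero by simp
  then have "d = 0"
    by (rule injD[OF \<open>inj L\<close>])
  then show "x = y"
    by (simp add: d_def)
qed

theorem inj_trace_quad_add_iff:
  fixes L :: "'a \<Rightarrow> 'a"
  assumes "\<And>x y. L (x + y) = L x + L y" and "bij L"
  shows "inj (\<lambda>x. Tr (x ^ (q + 1)) + L x) \<longleftrightarrow> Fq \<subseteq> L ` Fq2"
  using Fq_subset_image_Fq2_if_inj_trace_quad_add[OF assms(1) bij_is_surj[OF assms(2)]]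
    inj_trace_quad_add_if_Fq_subset_image_Fq2[OF assms(1) bij_is_inj[OF assms(2)]]
  by blast

end

theorem mainTheorem13:
  fixes m n q :: nat and a :: "nat \<Rightarrow> 'a::{field,finite}"
    and b :: "nat \<Rightarrow> nat \<Rightarrow> 'a"
  assumes m: "m \<ge> 1"
    and q: "q = 2 ^ m"
    and n: "even n"
    and card: "card (UNIV :: 'a set) = q ^ n"
    and bij: "bij (lin2_poly m n a)"
    and inv_repr: "\<And>x. inv (lin2_poly m n a) x
                      = (\<Sum>i<m. qlin_poly q n (b i) (x ^ (2 ^ i)))"
  shows "(bij (\<lambda>x. trace_map q n (x ^ (q + 1)) + lin2_poly m n a x)
            \<longleftrightarrow> (\<forall>i<m. qlin_poly q n (b i) 1 \<in> subfield_of_order (q ^ 2)))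
       \<and> ((\<forall>i<m. qlin_poly q n (b i) 1 \<in> subfield_of_order (q ^ 2))
            \<longleftrightarrow> subfield_of_order q \<subseteq> lin2_poly m n a ` subfield_of_order (q ^ 2))"
proof -
  have "n \<noteq> 0"
  proof
    assume "n = 0"
    then have "card (UNIV :: 'a set) = 1"
      using card by simp
    then show False
      by (metis card_1_singletonE UNIV_I singletonD zero_neq_one)
  qed
  then interpret even_binary_extension_field m n q "trace_map q n :: 'a \<Rightarrow> 'a"
    using m q n card by unfold_locales simp_all
  have bij_iff_inj: "bij f \<longleftrightarrow> inj f" for f :: "'a \<Rightarrow> 'a"
    by (auto simp: bij_def finite_UNIV_inj_surj)
  have additive: "lin2_poly m n a (x + y) = lin2_poly m n a x + lin2_poly m n a y" for x y
    using lin2_poly_add[OF CHAR_eq_2] .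
  have "Fq \<subseteq> lin2_poly m n a ` Fq2 \<longleftrightarrow> (\<forall>i<m. qlin_poly q n (b i) 1 \<in> Fq2)"
    using qlin_sum_on_Fq_in_Fq2_iff[of b] by (simp add: subset_image_iff_inv_mem[OF bij] inv_repr)
  with inj_trace_quad_add_iff[OF additive bij] show ?thesis
    by (simp add: bij_iff_inj)
qed

end
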